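(* Let $\mathcal{A}_l\subseteq\mathcal{A}$ be nonempty, $\alpha\in[0,1)$, and let $\pi^{(t)}\in\Delta(\mathcal{A}_l)$ be such that $(1-\alpha)V_{\pi^{(t)}}+\alpha V_{\pi_{\mathrm{off}}}$ is nonsingular. Let $\pi^{(t+1)}$ be obtained from $\pi^{(t)}$ by one Frank–Wolfe update as in the context. Then $$d(\pi^{(t+1)},\mathcal{A}_l,\alpha)-d(\pi^{(t)},\mathcal{A}_l,\alpha)\ge m(\delta(\pi^{(t)})),\qquad m(\delta):=\log(1+\delta)-\frac{\delta}{1+\delta}.$$
   Context: $\mathcal{A}\subset\mathbb{R}^d$ finite, spanning $\mathbb{R}^d$, with $d\ge2$; $\pi_{\mathrm{off}}\in\Delta(\mathcal{A})$; $V_\pi=\sum_a\pi(a)aa^\top$; $d(\pi,\mathcal{A}_l,\alpha)=\log\det(\alpha V_{\pi_{\mathrm{off}}}+(1-\alpha)V_\pi)$. For $\pi$ with $(1-\alpha)V_\pi+\alpha V_{\pi_{\mathrm{off}}}$ nonsingular let $H(\pi)=((1-\alpha)V_\pi+\alpha V_{\pi_{\mathrm{off}}})^{-1}$, $w_a=\mathrm{Tr}\big(H(\pi)((1-\alpha)aa^\top+\alpha V_{\pi_{\mathrm{off}}})\big)$ for $a\in\mathcal{A}_l$, $a_+\in\arg\max_{a\in\mathcal{A}_l}w_a$, and the slack $\delta(\pi)=\frac{w_{a_+}}{d}-1$. Frank–Wolfe update: with $w,a_+$ computed at $\pi^{(t)}$ and $\beta=\frac{w_{a_+}-d}{(d-1)w_{a_+}}$,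 $\pi^{(t+1)}=(1+\beta)^{-1}(\pi^{(t)}+\beta\mathbb{1}_{\{a_+\}})$. *)

theory Defs
  imports "HOL-Analysis.Analysis"
begin

definition outer :: "real^'n \<Rightarrow> real^'n^'n" where
  "outer a = (\<chi> i j. a $ i * a $ j)"

definition Vmat :: "(real^'n) set \<Rightarrow> (real^'n \<Rightarrow> real) \<Rightarrow> real^'n^'n" where
  "Vmat S \<pi> = (\<Sum>a\<in>S. \<pi> a *\<^sub>R outer a)"

definition is_dist :: "(real^'n) set \<Rightarrow> (real^'n \<Rightarrow> real) \<Rightarrow> bool" where
  "is_dist S \<pi> \<longleftrightarrow> (\<forall>a. 0 \<le> \<pi> a) \<and> (\<forall>a. a \<notin> S \<longrightarrow> \<pi> a = 0) \<and> sum \<pi> S = 1"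

definition Mmat :: "(real^'n) set \<Rightarrow> (real^'n) set \<Rightarrow> (real^'n \<Rightarrow> real) \<Rightarrow> real
    \<Rightarrow> (real^'n \<Rightarrow> real) \<Rightarrow> real^'n^'n" where
  "Mmat A Al \<pi>off \<alpha> \<pi> = (1 - \<alpha>) *\<^sub>R Vmat Al \<pi> + \<alpha> *\<^sub>R Vmat A \<pi>off"

definition dobj :: "(real^'n) set \<Rightarrow> (real^'n) set \<Rightarrow> (real^'n \<Rightarrow> real) \<Rightarrow> real
    \<Rightarrow> (real^'n \<Rightarrow> real) \<Rightarrow> real" where
  "dobj A Al \<pi>off \<alpha> \<pi> = ln (det (Mmat A Al \<pi>off \<alpha> \<pi>))"

definition wgt :: "(real^'n) set \<Rightarrow> (real^'n) set \<Rightarrow> (real^'n \<Rightarrow> real) \<Rightarrow> real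
    \<Rightarrow> (real^'n \<Rightarrow> real) \<Rightarrow> real^'n \<Rightarrow> real" where
  "wgt A Al \<pi>off \<alpha> \<pi> a =
     trace (matrix_inv (Mmat A Al \<pi>off \<alpha> \<pi>) ** ((1 - \<alpha>) *\<^sub>R outer a + \<alpha> *\<^sub>R Vmat A \<pi>off))"

definition mfun :: "real \<Rightarrow> real" where
  "mfun \<delta> = ln (1 + \<delta>) - \<delta> / (1 + \<delta>)"

end

theory Submission
  imports Defs
begin

(* Write M = (1 - alpha) V_pi + alpha V_off and G = (1 - alpha) a+ a+^T + alpha V_off. The
   Frank-Wolfe step gives M' = (M + beta G) / (1 + beta), and tr(M^-1 G) = w_{a+}. For positive
   definite M and any nonnegative combination G of rank-one matrices,
   det (M + G) >= det M * (1 + tr(M^-1 G)): add the rank-one terms one at a time, using the matrix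
   determinant lemma det (N + c u u^T) = det N * (1 + c u^T N^-1 u) and the fact that
   G <= tr(M^-1 G) M forces (M + G)^-1 >= M^-1 / (1 + tr(M^-1 G)). Hence the objective grows by at
   least log (1 + beta w) - d log (1 + beta). The pi-average of the w_a is tr(M^-1 M) = d, so w >= d
   and beta >= 0, and log (1 + beta) <= beta together with the choice of beta turns this bound
   into m(delta). *)

lemma quadratic_nonneg_imp_discriminant:
  fixes a b c :: real
  assumes "0 \<le> c" and nonneg: "\<And>t. 0 \<le> a + 2 * b * t + c * t\<^sup>2"
  shows "b\<^sup>2 \<le> a * c"
proof (cases "c = 0")
  case True
  have "b = 0"
  proof (rule ccontr)
    assume "b \<noteq> 0"
    then show False using nonneg[of "- (a + 1) / (2 * b)"] True by simp
  qed
  then show ?thesis using True by simp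
next
  case False
  then have "0 < c" using assms(1) by simp
  have "0 \<le> a - b\<^sup>2 / c"
    using nonneg[of "- b / c"] \<open>0 < c\<close> by (simp add: power2_eq_square field_simps)
  then show ?thesis using \<open>0 < c\<close> by (simp add: field_simps)
qed

lemma
  fixes N :: "real^'n^'n"
  assumes "invertible N"
  shows matrix_inv_right: "N ** matrix_inv N = mat 1"
    and matrix_inv_left: "matrix_inv N ** N = mat 1"
  using someI_ex[OF assms[unfolded invertible_def]] unfolding matrix_inv_def by auto

lemma matrix_inv_mult_vector:
  fixes N :: "real^'n^'n"
  assumes "invertible N"
  shows "N *v (matrix_inv N *v u) = u" and "matrix_inv N *v (N *v u) = u"
  by (simp_all add: matrix_vector_mul_assoc matrix_inv_right[OF assms] matrix_inv_left[OF assms])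

lemma outer_mult_vector: "outer u *v x = (u \<bullet> x) *\<^sub>R u"
  by (simp add: outer_def vec_eq_iff matrix_vector_mult_def inner_vec_def sum_distrib_left mult_ac)

lemma transpose_outer: "transpose (outer u) = outer u"
  by (simp add: outer_def transpose_def vec_eq_iff mult.commute)

lemma trace_mult_outer: "trace (H ** outer u) = u \<bullet> (H *v u)"
  by (simp add: trace_def matrix_matrix_mult_def outer_def inner_vec_def matrix_vector_mult_def
      sum_distrib_left mult_ac)

lemma trace_mult_scaleR: "trace ((H::real^'n^'n) ** (c *\<^sub>R A)) = c * trace (H ** A)"
  by (simp add: trace_def matrix_matrix_mult_def sum_distrib_left mult_ac)

lemma inner_matrix_vector_symmetric:
  fixes N :: "real^'n^'n"
  assumes "transpose N = N"
  shows "x \<bullet> (N *v y) = y \<bullet> (N *v x)"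
  by (metis assms dot_lmul_matrix inner_commute vector_transpose_matrix)

section \<open>Positive definite matrices\<close>

definition pos_semidef :: "real^'n^'n \<Rightarrow> bool" where
  "pos_semidef N \<longleftrightarrow> transpose N = N \<and> (\<forall>x. 0 \<le> x \<bullet> (N *v x))"

definition pos_def :: "real^'n^'n \<Rightarrow> bool" where
  "pos_def N \<longleftrightarrow> transpose N = N \<and> (\<forall>x. x \<noteq> 0 \<longrightarrow> 0 < x \<bullet> (N *v x))"

lemma pos_def_imp_pos_semidef: "pos_def N \<Longrightarrow> pos_semidef N"
  unfolding pos_def_def pos_semidef_def by (metis inner_zero_left order.refl less_imp_le)

lemma pos_semidef_add: "pos_semidef A \<Longrightarrow> pos_semidef B \<Longrightarrow> pos_semidef (A + B)"
  by (simp add: pos_semidef_def transpose_def vec_eq_iff matrix_vector_mult_add_rdistrib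
      inner_add_right)

lemma pos_semidef_scaleR: "pos_semidef A \<Longrightarrow> 0 \<le> c \<Longrightarrow> pos_semidef (c *\<^sub>R A)"
  by (simp add: pos_semidef_def transpose_scalar scaleR_matrix_vector_assoc[symmetric])

lemma pos_def_add_pos_semidef: "pos_def A \<Longrightarrow> pos_semidef B \<Longrightarrow> pos_def (A + B)"
  by (auto simp: pos_def_def pos_semidef_def transpose_def vec_eq_iff matrix_vector_mult_add_rdistrib
      inner_add_right add_pos_nonneg)

lemma pos_semidef_cauchy_schwarz:
  fixes N :: "real^'n^'n"
  assumes "pos_semidef N"
  shows "(x \<bullet> (N *v y))\<^sup>2 \<le> (x \<bullet> (N *v x)) * (y \<bullet> (N *v y))"
proof (rule quadratic_nonneg_imp_discriminant)
  have sym: "transpose N = N" and nonneg: "\<And>z. 0 \<le> z \<bullet> (N *v z)"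
    using assms by (auto simp: pos_semidef_def)
  show "0 \<le> y \<bullet> (N *v y)" by (rule nonneg)
  fix t
  have "(x + t *\<^sub>R y) \<bullet> (N *v (x + t *\<^sub>R y))
      = x \<bullet> (N *v x) + 2 * (x \<bullet> (N *v y)) * t + (y \<bullet> (N *v y)) * t\<^sup>2"
    using inner_matrix_vector_symmetric[OF sym, of x y]
    by (simp add: algebra_simps power2_eq_square)
  then show "0 \<le> x \<bullet> (N *v x) + 2 * (x \<bullet> (N *v y)) * t + (y \<bullet> (N *v y)) * t\<^sup>2"
    using nonneg by metis
qed

lemma pos_semidef_form_eq_0D:
  fixes N :: "real^'n^'n"
  assumes "pos_semidef N" "x \<bullet> (N *v x) = 0"
  shows "N *v x = 0"
proof -
  have "((N *v x) \<bullet> (N *v x))\<^sup>2 \<le> 0"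
    using pos_semidef_cauchy_schwarz[OF assms(1), of "N *v x" x] assms(2) by simp
  then show ?thesis by simp
qed

lemma pos_def_invertible:
  fixes N :: "real^'n^'n"
  assumes "pos_def N"
  shows "invertible N"
proof -
  have "x = 0" if "N *v x = 0" for x
    using assms that unfolding pos_def_def by force
  then have "inj ((*v) N)"
    by (intro injI) (metis eq_iff_diff_eq_0 matrix_vector_mult_diff_distrib)
  then have "det (matrix ((*v) N)) \<noteq> 0"
    by (subst det_nz_iff_inj) auto
  then show ?thesis by (simp add: invertible_det_nz)
qed

lemma pos_semidef_invertible_imp_pos_def:
  fixes N :: "real^'n^'n"
  assumes "pos_semidef N" "invertible N"
  shows "pos_def N"
proof -
  have "0 < x \<bullet> (N *v x)" if "x \<noteq> 0" for x
  proof -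
    have "N *v x \<noteq> N *v 0"
      using that inj_matrix_vector_mult[OF assms(2)] by (metis injD)
    then show ?thesis
      using assms(1) pos_semidef_form_eq_0D[OF assms(1), of x]
      by (force simp: pos_semidef_def order.order_iff_strict)
  qed
  then show ?thesis using assms(1) by (simp add: pos_def_def pos_semidef_def)
qed

lemma pos_def_inverse_cauchy_schwarz:
  fixes N :: "real^'n^'n"
  assumes "pos_def N"
  shows "(u \<bullet> x)\<^sup>2 \<le> (u \<bullet> (matrix_inv N *v u)) * (x \<bullet> (N *v x))"
proof -
  define y where "y = matrix_inv N *v u"
  have "N *v y = u"
    using matrix_inv_mult_vector[OF pos_def_invertible[OF assms]] by (simp add: y_def)
  then show ?thesis
    using pos_semidef_cauchy_schwarz[OF pos_def_imp_pos_semidef[OF assms], of x y]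
    by (simp add: y_def inner_commute mult.commute)
qed

lemma pos_def_inverse_form_nonneg:
  fixes N :: "real^'n^'n"
  assumes "pos_def N"
  shows "0 \<le> u \<bullet> (matrix_inv N *v u)"
proof -
  define y where "y = matrix_inv N *v u"
  have "N *v y = u"
    using matrix_inv_mult_vector[OF pos_def_invertible[OF assms]] by (simp add: y_def)
  then have "u \<bullet> (matrix_inv N *v u) = y \<bullet> (N *v y)"
    by (simp add: y_def[symmetric] inner_commute)
  then show ?thesis
    using pos_def_imp_pos_semidef[OF assms] by (simp add: pos_semidef_def)
qed

lemma pos_def_det_pos:
  fixes N :: "real^'n^'n"
  assumes "pos_def N"
  shows "0 < det N"
proof (rule ccontr)
  assume "\<not> 0 < det N"
  define g where "g t = (1 - t) *\<^sub>R (mat 1 :: real^'n^'n) + t *\<^sub>R N" for t :: real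
  have "pos_def (g t)" if "0 \<le> t" "t \<le> 1" for t
  proof (cases "t = 1")
    case True
    then show ?thesis using assms by (simp add: g_def)
  next
    case False
    then have "pos_def ((1 - t) *\<^sub>R (mat 1 :: real^'n^'n))"
      using that by (simp add: pos_def_def transpose_scalar scaleR_matrix_vector_assoc[symmetric])
    moreover have "pos_semidef (t *\<^sub>R N)"
      using that pos_semidef_scaleR pos_def_imp_pos_semidef[OF assms] by blast
    ultimately show ?thesis unfolding g_def by (rule pos_def_add_pos_semidef)
  qed
  moreover have "continuous_on {0..1} (\<lambda>t. - det (g t))"
    unfolding det_def g_def by (simp add: mat_def) (intro continuous_intros)
  then obtain t where "0 \<le> t" "t \<le> 1" "det (g t) = 0"
    using IVT'[of "\<lambda>t. - det (g t)" 0 0 1] \<open>\<not> 0 < det N\<close> by (auto simp: g_def)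
  ultimately show False
    using pos_def_invertible by (fastforce simp: invertible_det_nz)
qed

section \<open>Design matrices\<close>

lemma Vmat_insert: "finite S \<Longrightarrow> a \<notin> S \<Longrightarrow> Vmat (insert a S) c = c a *\<^sub>R outer a + Vmat S c"
  by (simp add: Vmat_def)

lemma Vmat_add_weights: "Vmat S (\<lambda>a. f a + g a) = Vmat S f + Vmat S g"
  by (simp add: Vmat_def scaleR_add_left sum.distrib)

lemma Vmat_scale_weights: "Vmat S (\<lambda>a. r * f a) = r *\<^sub>R Vmat S f"
  by (simp add: Vmat_def scaleR_sum_right)

lemma Vmat_indicator: "finite S \<Longrightarrow> b \<in> S \<Longrightarrow> Vmat S (\<lambda>a. if a = b then 1 else 0) = outer b"
  by (simp add: Vmat_def if_distrib[of "\<lambda>r. r *\<^sub>R outer _"] cong: if_cong)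

lemma inner_Vmat: "x \<bullet> (Vmat S c *v x) = (\<Sum>a\<in>S. c a * (a \<bullet> x)\<^sup>2)"
  by (induction S rule: infinite_finite_induct)
    (simp_all add: Vmat_def matrix_vector_mult_add_rdistrib scaleR_matrix_vector_assoc[symmetric]
      outer_mult_vector inner_add_right inner_commute power2_eq_square)

lemma trace_mult_Vmat: "trace (H ** Vmat S c) = (\<Sum>a\<in>S. c a * (a \<bullet> (H *v a)))"
  by (induction S rule: infinite_finite_induct)
    (simp_all add: Vmat_insert matrix_add_ldistrib trace_add trace_mult_scaleR trace_mult_outer,
      simp_all add: Vmat_def trace_def matrix_matrix_mult_def)

lemma pos_semidef_Vmat: "(\<And>a. a \<in> S \<Longrightarrow> 0 \<le> c a) \<Longrightarrow> pos_semidef (Vmat S c)"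
proof (induction S rule: infinite_finite_induct)
  case (insert a S)
  have "pos_semidef (c a *\<^sub>R outer a)"
    using insert.prems by (intro pos_semidef_scaleR)
      (simp_all add: pos_semidef_def transpose_outer outer_mult_vector inner_commute)
  then show ?case using insert by (simp add: Vmat_insert pos_semidef_add)
qed (simp_all add: Vmat_def pos_semidef_def transpose_def vec_eq_iff)

lemma Vmat_form_le:
  fixes N :: "real^'n^'n"
  assumes "pos_def N" "\<And>a. a \<in> S \<Longrightarrow> 0 \<le> c a"
  shows "x \<bullet> (Vmat S c *v x) \<le> (\<Sum>a\<in>S. c a * (a \<bullet> (matrix_inv N *v a))) * (x \<bullet> (N *v x))"
  unfolding inner_Vmat sum_distrib_right mult.assoc
  by (intro sum_mono mult_left_mono pos_def_inverse_cauchy_schwarz assms)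

section \<open>Determinants of positive semidefinite updates\<close>

lemma det_rows_add_multiples:
  fixes N :: "'a::comm_ring_1^'n^'n"
  assumes "finite T"
  shows "det (\<chi> i. if i \<in> T then N $ i + d i *s u else N $ i)
       = det N + (\<Sum>k\<in>T. d k * det (\<chi> i. if i = k then u else N $ i))"
  using assms
proof (induction T arbitrary: N rule: finite_induct)
  case (insert j T)
  let ?add = "\<lambda>M :: 'a^'n^'n. \<chi> i. if i \<in> T then M $ i + d i *s u else M $ i"
  let ?repl = "\<lambda>k (M :: 'a^'n^'n). \<chi> i. if i = k then u else M $ i"
  have "(\<chi> i. if i \<in> insert j T then N $ i + d i *s u else N $ i)
      = (\<chi> i. if i = j then N $ i + d j *s u else ?add N $ i)"
    using insert.hyps by (auto simp: vec_eq_iff)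
  then have "det (\<chi> i. if i \<in> insert j T then N $ i + d i *s u else N $ i)
      = det (\<chi> i. if i = j then N $ i else ?add N $ i) + d j * det (?repl j (?add N))"
    by (simp add: det_row_add det_row_mul)
  also have "(\<chi> i. if i = j then N $ i else ?add N $ i) = ?add N"
    using insert.hyps by (auto simp: vec_eq_iff)
  also have "?repl j (?add N) = ?add (?repl j N)"
    using insert.hyps by (auto simp: vec_eq_iff)
  also have "det (?add (?repl j N)) = det (?repl j N)"
  proof -
    \<comment> \<open>every correction term of the induction hypothesis for \<open>?repl j N\<close> has two rows \<open>u\<close>\<close>
    have "det (?repl k (?repl j N)) = 0" if "k \<in> T" for k
      using that insert.hyps by (intro det_identical_rows[of k j]) (auto simp: row_def vec_eq_iff)
    then show ?thesis using insert.IH by simp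
  qed
  finally show ?case using insert by (simp add: algebra_simps)
qed simp

lemma det_add_rank_one:
  fixes N :: "real^'n^'n"
  assumes "invertible N"
  shows "det (N + c *\<^sub>R outer u) = det N * (1 + c * (u \<bullet> (matrix_inv N *v u)))"
proof -
  define x where "x = u v* matrix_inv N"
  have "x v* N = u"
    by (simp add: x_def vector_matrix_mul_assoc matrix_inv_left[OF assms])
  have row_N: "row i N = N $ i" for i
    by (simp add: row_def)
  have combination: "(\<Sum>i\<in>UNIV. x $ i *s N $ i) = u"
    using \<open>x v* N = u\<close>
    by (simp add: vec_eq_iff vector_matrix_mult_def mult.commute)
  have replace: "det (\<chi> i. if i = k then u else N $ i) = x $ k * det N" for k
    using cramer_lemma_transpose[of k x N] unfolding row_N combination .
  have "N + c *\<^sub>R outer u = (\<chi> i. if i \<in> UNIV then N $ i + (c * u $ i) *s u else N $ i)"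
    by (simp add: vec_eq_iff outer_def mult_ac)
  then have "det (N + c *\<^sub>R outer u) = det N + (\<Sum>k\<in>UNIV. (c * u $ k) * (x $ k * det N))"
    using det_rows_add_multiples[of UNIV N "\<lambda>k. c * u $ k" u] by (simp add: replace)
  also have "\<dots> = det N * (1 + c * (u \<bullet> x))"
    by (simp add: inner_vec_def sum_distrib_left sum_distrib_right algebra_simps)
  also have "u \<bullet> x = u \<bullet> (matrix_inv N *v u)"
    by (metis x_def inner_commute dot_lmul_matrix)
  finally show ?thesis .
qed

lemma det_scaleR: "det (r *\<^sub>R (X :: real^'n^'n)) = r ^ CARD('n) * det X"
proof -
  have "r *\<^sub>R X = (\<chi> i. r *s X $ i)" by (simp add: vec_eq_iff)
  then show ?thesis by (simp add: det_rows_mul)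
qed

lemma inverse_form_le_of_form_le:
  fixes N G :: "real^'n^'n"
  assumes N: "pos_def N" and G: "pos_semidef G"
    and G_le: "\<And>x. x \<bullet> (G *v x) \<le> t * (x \<bullet> (N *v x))" and "0 \<le> t"
  shows "u \<bullet> (matrix_inv N *v u) \<le> (1 + t) * (u \<bullet> (matrix_inv (N + G) *v u))"
proof -
  have NG: "pos_def (N + G)" using pos_def_add_pos_semidef[OF N G] .
  define z where "z = matrix_inv N *v u"
  define s where "s = u \<bullet> z"
  define r where "r = u \<bullet> (matrix_inv (N + G) *v u)"
  have "N *v z = u"
    using matrix_inv_mult_vector[OF pos_def_invertible[OF N]] by (simp add: z_def)
  then have s_form: "z \<bullet> (N *v z) = s" by (simp add: s_def inner_commute)
  have "0 \<le> s" "0 \<le> r"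
    using pos_def_inverse_form_nonneg[OF N] pos_def_inverse_form_nonneg[OF NG]
    by (simp_all add: s_def z_def r_def)
  have "s\<^sup>2 \<le> r * (z \<bullet> ((N + G) *v z))"
    using pos_def_inverse_cauchy_schwarz[OF NG, of u z] by (simp add: s_def r_def)
  also have "z \<bullet> ((N + G) *v z) = s + z \<bullet> (G *v z)"
    using s_form by (simp add: matrix_vector_mult_add_rdistrib inner_add_right)
  also have "r * \<dots> \<le> r * ((1 + t) * s)"
    using G_le[of z] s_form \<open>0 \<le> r\<close> by (intro mult_left_mono) (auto simp: algebra_simps)
  finally have "s * s \<le> s * ((1 + t) * r)" by (simp add: power2_eq_square mult_ac)
  then have "s \<le> (1 + t) * r"
    using \<open>0 \<le> s\<close> \<open>0 \<le> r\<close> \<open>0 \<le> t\<close> by (cases "s = 0") auto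
  then show ?thesis by (simp add: s_def z_def r_def)
qed

lemma det_add_Vmat_ge:
  fixes N :: "real^'n^'n"
  assumes "finite S" and N: "pos_def N" and "\<And>a. a \<in> S \<Longrightarrow> 0 \<le> c a"
  shows "det N * (1 + (\<Sum>a\<in>S. c a * (a \<bullet> (matrix_inv N *v a)))) \<le> det (N + Vmat S c)"
  using assms(1,3)
proof (induction S rule: finite_induct)
  case (insert b S)
  define t where "t = (\<Sum>a\<in>S. c a * (a \<bullet> (matrix_inv N *v a)))"
  define s where "s = b \<bullet> (matrix_inv N *v b)"
  define r where "r = b \<bullet> (matrix_inv (N + Vmat S c) *v b)"
  have c: "\<And>a. a \<in> S \<Longrightarrow> 0 \<le> c a" "0 \<le> c b" using insert.prems by auto
  have G: "pos_semidef (Vmat S c)" using pos_semidef_Vmat c(1) .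
  have NG: "pos_def (N + Vmat S c)" using pos_def_add_pos_semidef[OF N G] .
  have "0 \<le> t"
    unfolding t_def using c(1) pos_def_inverse_form_nonneg[OF N] by (intro sum_nonneg) simp
  have "s \<le> (1 + t) * r"
    unfolding s_def r_def t_def
    by (intro inverse_form_le_of_form_le[OF N G] Vmat_form_le[OF N] c(1))
      (use \<open>0 \<le> t\<close> in \<open>simp_all add: t_def\<close>)
  have "0 \<le> r" using pos_def_inverse_form_nonneg[OF NG] by (simp add: r_def)
  have "1 + t + c b * s \<le> (1 + t) * (1 + c b * r)"
    using mult_left_mono[OF \<open>s \<le> (1 + t) * r\<close> c(2)] by (simp add: algebra_simps)
  then have "det N * (1 + t + c b * s) \<le> det N * ((1 + t) * (1 + c b * r))"
    using pos_def_det_pos[OF N] by simp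
  also have "\<dots> \<le> det (N + Vmat S c) * (1 + c b * r)"
    using insert.IH c \<open>0 \<le> r\<close> by (simp add: t_def mult.assoc[symmetric] mult_right_mono)
  also have "\<dots> = det (N + Vmat (insert b S) c)"
    using det_add_rank_one[OF pos_def_invertible[OF NG], of "c b" b] insert.hyps
    by (simp add: Vmat_insert r_def algebra_simps)
  finally show ?case using insert.hyps by (simp add: t_def s_def algebra_simps)
qed (simp add: Vmat_def)

lemma ln_det_scaled_update_ge:
  fixes N :: "real^'n^'n"
  assumes "finite S" and N: "pos_def N" and c: "\<And>a. a \<in> S \<Longrightarrow> 0 \<le> c a" and "0 \<le> \<beta>"
  shows "ln (1 + (\<Sum>a\<in>S. c a * (a \<bullet> (matrix_inv N *v a)))) - CARD('n) * ln (1 + \<beta>)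
      \<le> ln (det (inverse (1 + \<beta>) *\<^sub>R (N + Vmat S c))) - ln (det N)"
proof -
  define t where "t = (\<Sum>a\<in>S. c a * (a \<bullet> (matrix_inv N *v a)))"
  have "0 \<le> t"
    unfolding t_def using c pos_def_inverse_form_nonneg[OF N] by (intro sum_nonneg) simp
  have "0 < det N" using pos_def_det_pos[OF N] .
  have "0 < det (N + Vmat S c)"
    by (intro pos_def_det_pos pos_def_add_pos_semidef N pos_semidef_Vmat c)
  have "ln (det N) + ln (1 + t) \<le> ln (det (N + Vmat S c))"
    using det_add_Vmat_ge[OF \<open>finite S\<close> N c] \<open>0 \<le> t\<close> \<open>0 < det N\<close> \<open>0 < det (N + Vmat S c)\<close>
    by (simp add: t_def ln_mult_pos[symmetric])
  moreover have "ln (det (inverse (1 + \<beta>) *\<^sub>R (N + Vmat S c)))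
      = ln (det (N + Vmat S c)) - CARD('n) * ln (1 + \<beta>)"
    using \<open>0 \<le> \<beta>\<close> \<open>0 < det (N + Vmat S c)\<close>
    by (simp add: det_scaleR ln_mult_pos ln_realpow ln_inverse)
  ultimately show ?thesis by (simp add: t_def)
qed

section \<open>The Frank--Wolfe step\<close>

lemma Mmat_pos_def:
  assumes "is_dist A \<pi>off" "is_dist Al \<pi>" "0 \<le> \<alpha>" "\<alpha> \<le> 1"
    and "invertible (Mmat A Al \<pi>off \<alpha> \<pi>)"
  shows "pos_def (Mmat A Al \<pi>off \<alpha> \<pi>)"
  using assms unfolding Mmat_def is_dist_def
  by (intro pos_semidef_invertible_imp_pos_def pos_semidef_add pos_semidef_scaleR pos_semidef_Vmat)
    simp_all

lemma wgt_eq: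
  "wgt A Al \<pi>off \<alpha> \<pi> a = (1 - \<alpha>) * (a \<bullet> (matrix_inv (Mmat A Al \<pi>off \<alpha> \<pi>) *v a))
     + \<alpha> * (\<Sum>b\<in>A. \<pi>off b * (b \<bullet> (matrix_inv (Mmat A Al \<pi>off \<alpha> \<pi>) *v b)))"
  by (simp add: wgt_def matrix_add_ldistrib trace_add trace_mult_scaleR trace_mult_outer
      trace_mult_Vmat)

lemma sum_dist_wgt:
  fixes A :: "(real^'n) set"
  assumes "finite Al" "is_dist Al \<pi>" "invertible (Mmat A Al \<pi>off \<alpha> \<pi>)"
  shows "(\<Sum>a\<in>Al. \<pi> a * wgt A Al \<pi>off \<alpha> \<pi> a) = CARD('n)"
proof -
  define H where "H = matrix_inv (Mmat A Al \<pi>off \<alpha> \<pi>)"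
  define T where "T = (\<Sum>b\<in>A. \<pi>off b * (b \<bullet> (H *v b)))"
  have "(\<Sum>a\<in>Al. \<pi> a * wgt A Al \<pi>off \<alpha> \<pi> a)
      = (\<Sum>a\<in>Al. (1 - \<alpha>) * (\<pi> a * (a \<bullet> (H *v a))) + (\<alpha> * T) * \<pi> a)"
    by (simp add: wgt_eq H_def[symmetric] T_def[symmetric] algebra_simps)
  also have "\<dots> = (1 - \<alpha>) * (\<Sum>a\<in>Al. \<pi> a * (a \<bullet> (H *v a))) + \<alpha> * T * sum \<pi> Al"
    by (simp add: sum.distrib sum_distrib_left)
  also have "\<dots> = trace (H ** Mmat A Al \<pi>off \<alpha> \<pi>)"
    using assms(2) by (simp add: is_dist_def Mmat_def matrix_add_ldistrib trace_add
        trace_mult_scaleR trace_mult_Vmat T_def)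
  also have "\<dots> = CARD('n)"
    by (simp add: H_def matrix_inv_left[OF assms(3)] trace_I)
  finally show ?thesis .
qed

lemma dim_le_max_wgt:
  fixes A :: "(real^'n) set"
  assumes "finite Al" "is_dist Al \<pi>" "invertible (Mmat A Al \<pi>off \<alpha> \<pi>)"
    and "\<forall>a\<in>Al. wgt A Al \<pi>off \<alpha> \<pi> a \<le> wgt A Al \<pi>off \<alpha> \<pi> b"
  shows "CARD('n) \<le> wgt A Al \<pi>off \<alpha> \<pi> b"
proof -
  have "(\<Sum>a\<in>Al. \<pi> a * wgt A Al \<pi>off \<alpha> \<pi> a) \<le> (\<Sum>a\<in>Al. \<pi> a * wgt A Al \<pi>off \<alpha> \<pi> b)"
    using assms(2,4) by (intro sum_mono mult_left_mono) (auto simp: is_dist_def)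
  then show ?thesis
    using assms(2) by (simp add: sum_dist_wgt[OF assms(1-3)] sum_distrib_right[symmetric] is_dist_def)
qed

definition fw_step :: "(real^'n \<Rightarrow> real) \<Rightarrow> real^'n \<Rightarrow> real \<Rightarrow> real^'n \<Rightarrow> real" where
  "fw_step \<pi> b \<beta> = (\<lambda>a. (\<pi> a + \<beta> * (if a = b then 1 else 0)) / (1 + \<beta>))"

lemma Vmat_fw_step:
  assumes "finite S" "b \<in> S"
  shows "Vmat S (fw_step \<pi> b \<beta>) = inverse (1 + \<beta>) *\<^sub>R (Vmat S \<pi> + \<beta> *\<^sub>R outer b)"
proof -
  have "fw_step \<pi> b \<beta> = (\<lambda>a. inverse (1 + \<beta>) * (\<pi> a + \<beta> * (if a = b then 1 else 0)))"
    by (simp add: fw_step_def divide_inverse mult.commute)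
  then show ?thesis
    using assms by (simp add: Vmat_scale_weights Vmat_add_weights Vmat_indicator)
qed

lemma Mmat_fw_step:
  assumes "finite Al" "b \<in> Al" "\<beta> \<noteq> -1"
  shows "Mmat A Al \<pi>off \<alpha> (fw_step \<pi> b \<beta>) = inverse (1 + \<beta>) *\<^sub>R
    (Mmat A Al \<pi>off \<alpha> \<pi> + \<beta> *\<^sub>R ((1 - \<alpha>) *\<^sub>R outer b + \<alpha> *\<^sub>R Vmat A \<pi>off))"
proof -
  have "(1 - \<alpha>) *\<^sub>R (inverse (1 + \<beta>) *\<^sub>R (V + \<beta> *\<^sub>R X)) + \<alpha> *\<^sub>R W
      = inverse (1 + \<beta>) *\<^sub>R ((1 - \<alpha>) *\<^sub>R V + \<alpha> *\<^sub>R W + \<beta> *\<^sub>R ((1 - \<alpha>) *\<^sub>R X + \<alpha> *\<^sub>R W))"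
    for V X W :: "real^'n^'n"
  proof -
    have "inverse (1 + \<beta>) *\<^sub>R ((1 - \<alpha>) *\<^sub>R V + \<alpha> *\<^sub>R W + \<beta> *\<^sub>R ((1 - \<alpha>) *\<^sub>R X + \<alpha> *\<^sub>R W))
        = (1 - \<alpha>) *\<^sub>R (inverse (1 + \<beta>) *\<^sub>R (V + \<beta> *\<^sub>R X)) + (inverse (1 + \<beta>) * (1 + \<beta>) * \<alpha>) *\<^sub>R W"
      by (simp add: algebra_simps)
    also have "inverse (1 + \<beta>) * (1 + \<beta>) = 1"
      using assms(3) by (simp add: add_eq_0_iff)
    finally show ?thesis by simp
  qed
  then show ?thesis
    using assms(1,2) by (simp only: Mmat_def Vmat_fw_step)
qed

lemma dobj_fw_step_ge:
  fixes A Al :: "(real^'n) set"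
  assumes "finite A" "is_dist A \<pi>off" "Al \<subseteq> A" "0 \<le> \<alpha>" "\<alpha> \<le> 1" "is_dist Al \<pi>"
    and "invertible (Mmat A Al \<pi>off \<alpha> \<pi>)" "b \<in> Al" "0 \<le> \<beta>"
  shows "ln (1 + \<beta> * wgt A Al \<pi>off \<alpha> \<pi> b) - CARD('n) * ln (1 + \<beta>)
    \<le> dobj A Al \<pi>off \<alpha> (fw_step \<pi> b \<beta>) - dobj A Al \<pi>off \<alpha> \<pi>"
proof -
  define M where "M = Mmat A Al \<pi>off \<alpha> \<pi>"
  define \<rho> where "\<rho> a = \<beta> * ((1 - \<alpha>) * (if a = b then 1 else 0) + \<alpha> * \<pi>off a)" for a
  have M: "pos_def M" unfolding M_def using assms by (intro Mmat_pos_def) auto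
  have \<rho>: "0 \<le> \<rho> a" for a
    using assms(2,4,5,9) by (simp add: \<rho>_def is_dist_def)
  have "finite Al" "b \<in> A" using assms(1,3,8) finite_subset by auto
  have "\<beta> *\<^sub>R ((1 - \<alpha>) *\<^sub>R outer b + \<alpha> *\<^sub>R Vmat A \<pi>off) = Vmat A \<rho>"
    using \<open>finite A\<close> \<open>b \<in> A\<close>
    by (simp add: \<rho>_def[abs_def] Vmat_scale_weights Vmat_add_weights Vmat_indicator)
  then have "Mmat A Al \<pi>off \<alpha> (fw_step \<pi> b \<beta>) = inverse (1 + \<beta>) *\<^sub>R (M + Vmat A \<rho>)"
    using Mmat_fw_step[OF \<open>finite Al\<close> assms(8)] assms(9) by (simp add: M_def)
  moreover have "(\<Sum>a\<in>A. \<rho> a * (a \<bullet> (matrix_inv M *v a))) = \<beta> * wgt A Al \<pi>off \<alpha> \<pi> b"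
  proof -
    define q where "q a = a \<bullet> (matrix_inv M *v a)" for a
    have "\<rho> a * q a = \<beta> * (1 - \<alpha>) * (if a = b then q a else 0) + \<beta> * \<alpha> * (\<pi>off a * q a)" for a
      by (simp add: \<rho>_def algebra_simps)
    then have "(\<Sum>a\<in>A. \<rho> a * q a) = \<beta> * ((1 - \<alpha>) * q b + \<alpha> * (\<Sum>a\<in>A. \<pi>off a * q a))"
      using \<open>finite A\<close> \<open>b \<in> A\<close>
      by (simp add: sum.distrib sum_distrib_left[symmetric] distrib_left mult.assoc)
    then show ?thesis by (simp add: q_def wgt_eq M_def)
  qed
  ultimately show ?thesis
    using ln_det_scaled_update_ge[OF \<open>finite A\<close> M, of \<rho> \<beta>] \<rho> \<open>0 \<le> \<beta>\<close>
    by (simp add: dobj_def M_def)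
qed

lemma fw_gain_ge_mfun:
  fixes d w \<beta> :: real
  assumes "1 < d" "d \<le> w" "\<beta> = (w - d) / ((d - 1) * w)"
  shows "mfun (w / d - 1) \<le> ln (1 + \<beta> * w) - d * ln (1 + \<beta>)"
proof -
  have "0 < w" "0 \<le> \<beta>" using assms by auto
  have "ln (1 + \<beta> * w) = ln (w / d) + ln (1 + \<beta>)"
  proof -
    have "1 + \<beta> * w = (w / d) * (1 + \<beta>)" using assms \<open>0 < w\<close> by (simp add: field_simps)
    moreover have "0 < w / d" "0 < 1 + \<beta>" using assms(1) \<open>0 < w\<close> \<open>0 \<le> \<beta>\<close> by auto
    ultimately show ?thesis by (metis ln_mult_pos)
  qed
  moreover have "(d - 1) * ln (1 + \<beta>) \<le> (d - 1) * \<beta>"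
    using assms(1) \<open>0 \<le> \<beta>\<close> ln_add_one_self_le_self by simp
  moreover have "(d - 1) * \<beta> = (w - d) / w" using assms \<open>0 < w\<close> by (simp add: field_simps)
  moreover have "mfun (w / d - 1) = ln (w / d) - (w - d) / w"
    using assms \<open>0 < w\<close> by (simp add: mfun_def field_simps)
  ultimately show ?thesis by (simp add: algebra_simps)
qed

theorem lemma5p4:
  fixes A Al :: "(real^'n) set"
    and \<pi>off \<pi> :: "real^'n \<Rightarrow> real"
    and \<alpha> :: real
    and aplus :: "real^'n"
  assumes dim: "CARD('n) \<ge> 2"
    and finA: "finite A"
    and spanA: "span A = UNIV"
    and off: "is_dist A \<pi>off"
    and sub: "Al \<subseteq> A"
    and ne: "Al \<noteq> {}"
    and alpha: "0 \<le> \<alpha>" "\<alpha> < 1"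
    and pit: "is_dist Al \<pi>"
    and nonsing: "invertible (Mmat A Al \<pi>off \<alpha> \<pi>)"
    and aplus_mem: "aplus \<in> Al"
    and aplus_max: "\<forall>a\<in>Al. wgt A Al \<pi>off \<alpha> \<pi> a \<le> wgt A Al \<pi>off \<alpha> \<pi> aplus"
  shows
    "let w = wgt A Al \<pi>off \<alpha> \<pi> aplus;
         d = real CARD('n);
         \<beta> = (w - d) / ((d - 1) * w);
         \<pi>' = (\<lambda>a. (\<pi> a + \<beta> * (if a = aplus then 1 else 0)) / (1 + \<beta>));
         \<delta> = w / d - 1
     in dobj A Al \<pi>off \<alpha> \<pi>' - dobj A Al \<pi>off \<alpha> \<pi> \<ge> mfun \<delta>"
proof -
  define w where "w = wgt A Al \<pi>off \<alpha> \<pi> aplus"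
  define d where "d = real CARD('n)"
  define \<beta> where "\<beta> = (w - d) / ((d - 1) * w)"
  have "d \<le> w"
    unfolding d_def w_def using finite_subset[OF sub finA] pit nonsing aplus_max
    by (rule dim_le_max_wgt)
  have "1 < d" using dim by (simp add: d_def)
  then have "0 \<le> \<beta>" using \<open>d \<le> w\<close> by (simp add: \<beta>_def)
  have "ln (1 + \<beta> * w) - d * ln (1 + \<beta>)
      \<le> dobj A Al \<pi>off \<alpha> (fw_step \<pi> aplus \<beta>) - dobj A Al \<pi>off \<alpha> \<pi>"
    unfolding w_def d_def using finA off sub alpha pit nonsing aplus_mem \<open>0 \<le> \<beta>\<close>
    by (intro dobj_fw_step_ge) auto
  moreover have "mfun (w / d - 1) \<le> ln (1 + \<beta> * w) - d * ln (1 + \<beta>)"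
    using \<open>1 < d\<close> \<open>d \<le> w\<close> \<beta>_def by (rule fw_gain_ge_mfun)
  ultimately show ?thesis
    unfolding Let_def fw_step_def w_def[symmetric] d_def[symmetric] \<beta>_def[symmetric] by linarith
qed

end
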